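(* Let $n\ge3$, let $S_n$ act on $V=\mathbb{C}^n$ by permutations, fix $a,b,c\in\mathbb{C}$, let $*\in\{L,C\}$, let $g$ be a $5$-cycle, and let $\phi^*_g$ be the $g$-component of $\phi(\kappa^*_{\mathrm{tri}},\kappa^L_{\mathrm{tri}})$. Then $\phi^C_g\equiv0$. Moreover, if $e_i\in V^g$ then $\phi^L_g(e_i,e_j,e_k)=0$ for all $j,k$, and for $1\leq i\leq n$, $$\phi^L_g(e_i,ge_i,g^2e_i)=2(a-b)^2\big(e_i+ge_i-g^2e_i-g^3e_i\big),$$ $$\phi^L_g(e_i,ge_i,g^3e_i)=2(a-b)^2\big(-2e_i+2g^2e_i+g^3e_i-g^4e_i\big).$$
   Context: $S_n$ acts by $\sigma e_i=e_{\sigma(i)}$; $V^g$ is the fixed space of $g$. $\kappa^L_{\mathrm{tri}}$ is the linear 2-cochain supported on 3-cycles with $\kappa^L_{(ijk)}(e_i,e_j)=\kappa^L_{(ijk)}(e_j,e_k)=\kappa^L_{(ijk)}(e_k,e_i)=a(e_i+e_j+e_k)+b\sum_{l\notin\{i,j,k\}}e_l$ and $\kappa^L_{(ijk)}(e_l,e_m)=0$ whenever $e_l$ or $e_m$ lies in $V^{(ijk)}$; $\kappa^C_{\mathrm{tri}}$ is the constant 2-cochain supported on 3-cycles with $\kappa^C_{(ijk)}(e_i,e_j)=\kappa^C_{(ijk)}(e_j,e_k)=\kappa^C_{(ijk)}(e_k,e_i)=c$ and $\kappa^C_{(ijk)}(e_l,e_m)=0$ whenever $e_l$ or $e_m$ lies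 in $V^{(ijk)}$. For $\alpha$ linear or constant and $\beta$ linear, $\phi(\alpha,\beta)=\sum_g\phi_gg$, $\phi_g=\sum_{xy=g}\phi_{x,y}$, $\phi_{x,y}(v_1,v_2,v_3)=\alpha_x(v_1+yv_1,\beta_y(v_2,v_3))+\alpha_x(v_2+yv_2,\beta_y(v_3,v_1))+\alpha_x(v_3+yv_3,\beta_y(v_1,v_2))$. *)

theory Defs
  imports "HOL-Combinatorics.Combinatorics"
begin

(* V = C^n with basis indexed by the finite type 'n; vectors are 'n => complex *)

definition basis :: "'n \<Rightarrow> ('n \<Rightarrow> complex)" where
  "basis i = (\<lambda>l. if l = i then 1 else 0)"

(* permutation action: sigma e_i = e_(sigma i) *)
definition pact :: "('n \<Rightarrow> 'n) \<Rightarrow> ('n \<Rightarrow> complex) \<Rightarrow> ('n \<Rightarrow> complex)" where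
  "pact \<sigma> v = (\<lambda>l. v (inv \<sigma> l))"

definition vadd :: "('n \<Rightarrow> complex) \<Rightarrow> ('n \<Rightarrow> complex) \<Rightarrow> ('n \<Rightarrow> complex)" where
  "vadd u v = (\<lambda>l. u l + v l)"

definition vsub :: "('n \<Rightarrow> complex) \<Rightarrow> ('n \<Rightarrow> complex) \<Rightarrow> ('n \<Rightarrow> complex)" where
  "vsub u v = (\<lambda>l. u l - v l)"

definition smul :: "complex \<Rightarrow> ('n \<Rightarrow> complex) \<Rightarrow> ('n \<Rightarrow> complex)" where
  "smul c v = (\<lambda>l. c * v l)"

definition is_3cycle :: "('n \<Rightarrow> 'n) \<Rightarrow> bool" where
  "is_3cycle g \<longleftrightarrow> (\<exists>i j k. distinct [i, j, k] \<and> g = cycle_of_list [i, j, k])"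

definition is_5cycle :: "('n \<Rightarrow> 'n) \<Rightarrow> bool" where
  "is_5cycle g \<longleftrightarrow> (\<exists>cs. length cs = 5 \<and> distinct cs \<and> g = cycle_of_list cs)"

(* values of kappa^L_tri on basis pairs (e_l, e_m); for g = (i j k) the value on
   (e_i,e_j),(e_j,e_k),(e_k,e_i) is a(e_i+e_j+e_k) + b sum_{others} e_l; extended
   alternatingly; zero if e_l or e_m fixed by g; zero for g not a 3-cycle. *)
definition kL_basis :: "complex \<Rightarrow> complex \<Rightarrow> ('n \<Rightarrow> 'n) \<Rightarrow> 'n \<Rightarrow> 'n \<Rightarrow> ('n \<Rightarrow> complex)" where
  "kL_basis a b g l m =
     (if is_3cycle g \<and> g l \<noteq> l \<and> g m \<noteq> m then
        (let w = (\<lambda>p. if g p \<noteq> p then a else b) in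
          if m = g l then w else if l = g m then (\<lambda>p. - w p) else (\<lambda>p. 0))
      else (\<lambda>p. 0))"

definition kC_basis :: "complex \<Rightarrow> ('n \<Rightarrow> 'n) \<Rightarrow> 'n \<Rightarrow> 'n \<Rightarrow> complex" where
  "kC_basis c g l m =
     (if is_3cycle g \<and> g l \<noteq> l \<and> g m \<noteq> m then
        (if m = g l then c else if l = g m then - c else 0)
      else 0)"

definition kappaL :: "complex \<Rightarrow> complex \<Rightarrow> ('n::finite \<Rightarrow> 'n) \<Rightarrow> ('n \<Rightarrow> complex) \<Rightarrow> ('n \<Rightarrow> complex) \<Rightarrow> ('n \<Rightarrow> complex)" where
  "kappaL a b g u v = (\<lambda>p. \<Sum>l\<in>UNIV. \<Sum>m\<in>UNIV. u l * v m * kL_basis a b g l m p)"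

definition kappaC :: "complex \<Rightarrow> ('n::finite \<Rightarrow> 'n) \<Rightarrow> ('n \<Rightarrow> complex) \<Rightarrow> ('n \<Rightarrow> complex) \<Rightarrow> complex" where
  "kappaC c g u v = (\<Sum>l\<in>UNIV. \<Sum>m\<in>UNIV. u l * v m * kC_basis c g l m)"

(* phi_{x,y} for alpha = kappa^L_tri resp. kappa^C_tri, beta = kappa^L_tri *)
definition phiL_xy :: "complex \<Rightarrow> complex \<Rightarrow> ('n::finite \<Rightarrow> 'n) \<Rightarrow> ('n \<Rightarrow> 'n) \<Rightarrow>
    ('n \<Rightarrow> complex) \<Rightarrow> ('n \<Rightarrow> complex) \<Rightarrow> ('n \<Rightarrow> complex) \<Rightarrow> ('n \<Rightarrow> complex)" where
  "phiL_xy a b x y v1 v2 v3 =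
     vadd (vadd (kappaL a b x (vadd v1 (pact y v1)) (kappaL a b y v2 v3))
                (kappaL a b x (vadd v2 (pact y v2)) (kappaL a b y v3 v1)))
          (kappaL a b x (vadd v3 (pact y v3)) (kappaL a b y v1 v2))"

definition phiC_xy :: "complex \<Rightarrow> complex \<Rightarrow> complex \<Rightarrow> ('n::finite \<Rightarrow> 'n) \<Rightarrow> ('n \<Rightarrow> 'n) \<Rightarrow>
    ('n \<Rightarrow> complex) \<Rightarrow> ('n \<Rightarrow> complex) \<Rightarrow> ('n \<Rightarrow> complex) \<Rightarrow> complex" where
  "phiC_xy a b c x y v1 v2 v3 =
       kappaC c x (vadd v1 (pact y v1)) (kappaL a b y v2 v3)
     + kappaC c x (vadd v2 (pact y v2)) (kappaL a b y v3 v1)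
     + kappaC c x (vadd v3 (pact y v3)) (kappaL a b y v1 v2)"

definition factorizations :: "('n \<Rightarrow> 'n) \<Rightarrow> (('n \<Rightarrow> 'n) \<times> ('n \<Rightarrow> 'n)) set" where
  "factorizations g = {(x, y). x permutes UNIV \<and> y permutes UNIV \<and> x \<circ> y = g}"

definition phiL :: "complex \<Rightarrow> complex \<Rightarrow> ('n::finite \<Rightarrow> 'n) \<Rightarrow>
    ('n \<Rightarrow> complex) \<Rightarrow> ('n \<Rightarrow> complex) \<Rightarrow> ('n \<Rightarrow> complex) \<Rightarrow> ('n \<Rightarrow> complex)" where
  "phiL a b g v1 v2 v3 = (\<lambda>p. \<Sum>(x, y)\<in>factorizations g. phiL_xy a b x y v1 v2 v3 p)"

definition phiC :: "complex \<Rightarrow> complex \<Rightarrow> complex \<Rightarrow> ('n::finite \<Rightarrow> 'n) \<Rightarrow>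
    ('n \<Rightarrow> complex) \<Rightarrow> ('n \<Rightarrow> complex) \<Rightarrow> ('n \<Rightarrow> complex) \<Rightarrow> complex" where
  "phiC a b c g v1 v2 v3 = (\<Sum>(x, y)\<in>factorizations g. phiC_xy a b c x y v1 v2 v3)"

end

theory Submission
  imports Defs
begin

text \<open>
  Both cochains vanish off 3-cycles, so only factorisations of the 5-cycle
  \<open>g = (d0 d1 d2 d3 d4)\<close> into two 3-cycles contribute to \<open>\<phi>\<^sub>g\<close>; there are exactly five,
  \<open>g = (d(k+3) d(k+4) dk) (dk d(k+1) d(k+2))\<close> with indices mod 5, the two factors sharing
  exactly one point.
  On a 3-cycle \<open>(p q r)\<close> both cochains are a fixed skew form in the coordinates
  \<open>p, q, r\<close> times a constant (\<open>\<kappa>\<^sup>C\<close>) or times the vector with entries \<open>a\<close> on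
  \<open>{p, q, r}\<close> and \<open>b\<close> elsewhere (\<open>\<kappa>\<^sup>L\<close>). This turns \<open>\<phi>\<^sub>g\<close> into an explicit
  polynomial expression in the coordinates of the arguments, and all claims become
  finite computations in the five points \<open>dk\<close>.
\<close>

subsection \<open>3-cycles and 5-cycles as explicit maps\<close>

definition cycle3 :: "'a \<Rightarrow> 'a \<Rightarrow> 'a \<Rightarrow> 'a \<Rightarrow> 'a" where
  "cycle3 p q r = (\<lambda>z. if z = p then q else if z = q then r else if z = r then p else z)"

definition cycle5 :: "'a \<Rightarrow> 'a \<Rightarrow> 'a \<Rightarrow> 'a \<Rightarrow> 'a \<Rightarrow> 'a \<Rightarrow> 'a" where
  "cycle5 d0 d1 d2 d3 d4 = (\<lambda>z. if z = d0 then d1 else if z = d1 then d2 else if z = d2 then d3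
     else if z = d3 then d4 else if z = d4 then d0 else z)"

lemma distinct5_neq:
  assumes "distinct [d0, d1, d2, d3, d4]"
  shows "d0 \<noteq> d1" "d0 \<noteq> d2" "d0 \<noteq> d3" "d0 \<noteq> d4" "d1 \<noteq> d2" "d1 \<noteq> d3" "d1 \<noteq> d4"
    "d2 \<noteq> d3" "d2 \<noteq> d4" "d3 \<noteq> d4" "d1 \<noteq> d0" "d2 \<noteq> d0" "d3 \<noteq> d0" "d4 \<noteq> d0"
    "d2 \<noteq> d1" "d3 \<noteq> d1" "d4 \<noteq> d1" "d3 \<noteq> d2" "d4 \<noteq> d2" "d4 \<noteq> d3"
  using assms by auto

lemma cycle_of_list_3: "distinct [p, q, r] \<Longrightarrow> cycle_of_list [p, q, r] = cycle3 p q r"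
  by (auto simp: fun_eq_iff cycle3_def Transposition.transpose_def)

lemma cycle_of_list_5:
  "distinct [d0, d1, d2, d3, d4] \<Longrightarrow> cycle_of_list [d0, d1, d2, d3, d4] = cycle5 d0 d1 d2 d3 d4"
  by (auto simp: fun_eq_iff cycle5_def Transposition.transpose_def)

lemma cycle3_permutes: "distinct [p, q, r] \<Longrightarrow> cycle3 p q r permutes UNIV"
  by (metis cycle_of_list_3 cycle_permutes permutes_subset subset_UNIV)

lemma cycle5_permutes: "distinct [d0, d1, d2, d3, d4] \<Longrightarrow> cycle5 d0 d1 d2 d3 d4 permutes UNIV"
  by (metis cycle_of_list_5 cycle_permutes permutes_subset subset_UNIV)

lemma inv_cycle3: "distinct [p, q, r] \<Longrightarrow> inv (cycle3 p q r) = cycle3 r q p"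
  by (rule inv_unique_comp) (auto simp: fun_eq_iff cycle3_def)

lemma cycle3_rotate: "distinct [p, q, r] \<Longrightarrow> cycle3 p q r = cycle3 q r p"
  by (auto simp: fun_eq_iff cycle3_def)

lemma cycle3_moved: "distinct [p, q, r] \<Longrightarrow> {z. cycle3 p q r z \<noteq> z} = {p, q, r}"
  by (auto simp: cycle3_def)

lemma cycle5_moved:
  "distinct [d0, d1, d2, d3, d4] \<Longrightarrow> {z. cycle5 d0 d1 d2 d3 d4 z \<noteq> z} = {d0, d1, d2, d3, d4}"
  by (auto simp: cycle5_def)

lemma cycle5_funpow:
  assumes "distinct [d0, d1, d2, d3, d4]"
  shows "(cycle5 d0 d1 d2 d3 d4 ^^ 2) d0 = d2" "(cycle5 d0 d1 d2 d3 d4 ^^ 3) d0 = d3"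
    "(cycle5 d0 d1 d2 d3 d4 ^^ 4) d0 = d4"
  using assms by (auto simp: numeral_eq_Suc cycle5_def)

lemma is_3cycle_cycle3: "distinct [p, q, r] \<Longrightarrow> is_3cycle (cycle3 p q r)"
  unfolding is_3cycle_def by (metis cycle_of_list_3)

lemma is_3cycleE:
  assumes "is_3cycle x"
  obtains p q r where "distinct [p, q, r]" "x = cycle3 p q r"
  using assms unfolding is_3cycle_def by (metis cycle_of_list_3)

lemma is_5cycleE:
  assumes "is_5cycle g"
  obtains d0 d1 d2 d3 d4 where "distinct [d0, d1, d2, d3, d4]" "g = cycle5 d0 d1 d2 d3 d4"
proof -
  obtain cs where cs: "length cs = 5" "distinct cs" "g = cycle_of_list cs"
    using assms unfolding is_5cycle_def by blast
  then obtain d0 d1 d2 d3 d4 where "cs = [d0, d1, d2, d3, d4]"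
    by (auto simp: numeral_eq_Suc length_Suc_conv)
  with cs show ?thesis using that cycle_of_list_5 by metis
qed

lemma cycle3_rotate_to:
  assumes "distinct [p, q, r]" "z \<in> {p, q, r}"
  obtains j k where "distinct [z, j, k]" "{p, q, r} = {z, j, k}" "cycle3 p q r = cycle3 z j k"
proof -
  have rot: "cycle3 p q r = cycle3 q r p" "cycle3 q r p = cycle3 r p q"
    using assms(1) cycle3_rotate[of p q r] cycle3_rotate[of q r p] by auto
  have "z = p \<or> z = q \<or> z = r" using assms(2) by auto
  then show ?thesis
  proof (elim disjE)
    assume "z = p" then show ?thesis using assms(1) by (intro that[of q r]) auto
  next
    assume "z = q" then show ?thesis using assms(1) rot by (intro that[of r p]) auto
  next
    assume "z = r" then show ?thesis using assms(1) rot by (intro that[of p q]) auto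
  qed
qed

lemma cycle5_rotate_to:
  assumes d: "distinct [d0, d1, d2, d3, d4]" and i: "i \<in> {d0, d1, d2, d3, d4}"
  obtains e1 e2 e3 e4 where "distinct [i, e1, e2, e3, e4]"
    "cycle5 d0 d1 d2 d3 d4 = cycle5 i e1 e2 e3 e4"
proof -
  have rot: "cycle5 d0 d1 d2 d3 d4 = cycle5 d1 d2 d3 d4 d0"
    "cycle5 d1 d2 d3 d4 d0 = cycle5 d2 d3 d4 d0 d1"
    "cycle5 d2 d3 d4 d0 d1 = cycle5 d3 d4 d0 d1 d2"
    "cycle5 d3 d4 d0 d1 d2 = cycle5 d4 d0 d1 d2 d3"
    using d by (auto simp: fun_eq_iff cycle5_def)
  have "i = d0 \<or> i = d1 \<or> i = d2 \<or> i = d3 \<or> i = d4" using i by auto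
  then show ?thesis
  proof (elim disjE)
    assume "i = d0" then show ?thesis using d by (intro that[of d1 d2 d3 d4]) auto
  next
    assume "i = d1" then show ?thesis using d rot by (intro that[of d2 d3 d4 d0]) auto
  next
    assume "i = d2" then show ?thesis using d rot by (intro that[of d3 d4 d0 d1]) auto
  next
    assume "i = d3" then show ?thesis using d rot by (intro that[of d4 d0 d1 d2]) auto
  next
    assume "i = d4" then show ?thesis using d rot by (intro that[of d0 d1 d2 d3]) auto
  qed
qed

lemma cycle3_comp_cycle3: "distinct [p, q, z, j, k] \<Longrightarrow> cycle3 p q z \<circ> cycle3 z j k = cycle5 z j k p q"
  by (auto simp: fun_eq_iff cycle3_def cycle5_def)

lemma cycle5_eq_cycle5D:
  assumes d: "distinct [d0, d1, d2, d3, d4]" and e: "distinct [e0, e1, e2, e3, e4]"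
    and eq: "cycle5 e0 e1 e2 e3 e4 = cycle5 d0 d1 d2 d3 d4"
  shows "(e0, e1, e2, e3, e4) \<in> {(d0, d1, d2, d3, d4), (d1, d2, d3, d4, d0), (d2, d3, d4, d0, d1),
    (d3, d4, d0, d1, d2), (d4, d0, d1, d2, d3)}"
proof -
  let ?G = "cycle5 d0 d1 d2 d3 d4"
  have succ: "?G e0 = e1" "?G e1 = e2" "?G e2 = e3" "?G e3 = e4"
    using e unfolding eq[symmetric] by (auto simp: cycle5_def)
  then have orbit: "e1 = ?G e0" "e2 = ?G (?G e0)" "e3 = ?G (?G (?G e0))" "e4 = ?G (?G (?G (?G e0)))"
    by simp_all
  have "e0 \<in> {z. ?G z \<noteq> z}" using succ(1) e by auto
  then have "e0 = d0 \<or> e0 = d1 \<or> e0 = d2 \<or> e0 = d3 \<or> e0 = d4" using cycle5_moved[OF d] by auto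
  then show ?thesis unfolding orbit using d by (elim disjE) (auto simp: cycle5_def)
qed

lemma cycle3_comp_cycle3_disjoint_moved:
  assumes "distinct [p, q, r, i, j, k]"
  shows "{z. (cycle3 p q r \<circ> cycle3 i j k) z \<noteq> z} = {p, q, r, i, j, k}"
  using assms by (auto simp: cycle3_def)

lemma cycle5_eq_comp_3cycles:
  assumes d: "distinct [d0, d1, d2, d3, d4]" and x: "is_3cycle x" and y: "is_3cycle y"
    and xy: "x \<circ> y = cycle5 d0 d1 d2 d3 d4"
  shows "(x, y) \<in> {(cycle3 d3 d4 d0, cycle3 d0 d1 d2), (cycle3 d4 d0 d1, cycle3 d1 d2 d3),
     (cycle3 d0 d1 d2, cycle3 d2 d3 d4), (cycle3 d1 d2 d3, cycle3 d3 d4 d0),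
     (cycle3 d2 d3 d4, cycle3 d4 d0 d1)}"
proof -
  let ?D = "{d0, d1, d2, d3, d4}"
  have moved: "{z. (x \<circ> y) z \<noteq> z} = ?D" using cycle5_moved[OF d] xy by simp
  have card_D: "card ?D = 5" using d by (simp add: distinct_card[symmetric])
  obtain p q r where pqr: "distinct [p, q, r]" "x = cycle3 p q r" using x by (rule is_3cycleE)
  obtain i j k where ijk: "distinct [i, j, k]" "y = cycle3 i j k" using y by (rule is_3cycleE)
  have "{p, q, r} \<inter> {i, j, k} \<noteq> {}"
  proof
    assume "{p, q, r} \<inter> {i, j, k} = {}"
    then have six: "distinct [p, q, r, i, j, k]" using pqr ijk by auto
    have "{z. (x \<circ> y) z \<noteq> z} = set [p, q, r, i, j, k]"
      using cycle3_comp_cycle3_disjoint_moved[OF six] pqr ijk by simp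
    then have "card {z. (x \<circ> y) z \<noteq> z} = 6" using distinct_card[OF six] by simp
    with moved card_D show False by simp
  qed
  then obtain z where z: "z \<in> {p, q, r}" "z \<in> {i, j, k}" by blast
  obtain p' q' where p'q': "distinct [z, p', q']" "{p, q, r} = {z, p', q'}" "cycle3 p q r = cycle3 z p' q'"
    using pqr(1) z(1) by (rule cycle3_rotate_to)
  obtain j' k' where j'k': "distinct [z, j', k']" "{i, j, k} = {z, j', k'}" "cycle3 i j k = cycle3 z j' k'"
    using ijk(1) z(2) by (rule cycle3_rotate_to)
  have x': "x = cycle3 p' q' z" using pqr(2) p'q' cycle3_rotate[OF p'q'(1)] by simp
  have y': "y = cycle3 z j' k'" using ijk(2) j'k'(3) by simp
  have "?D \<subseteq> {z. x z \<noteq> z} \<union> {z. y z \<noteq> z}" unfolding moved[symmetric] by auto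
  also have "\<dots> = set [p', q', z, j', k']"
    using pqr ijk p'q'(2) j'k'(2) by (simp add: cycle3_moved) blast
  finally have "card ?D \<le> card (set [p', q', z, j', k'])" by (intro card_mono) auto
  then have five: "distinct [p', q', z, j', k']"
    using card_D card_length[of "[p', q', z, j', k']"] by (intro card_distinct) simp
  have "cycle5 z j' k' p' q' = cycle5 d0 d1 d2 d3 d4"
    using xy x' y' cycle3_comp_cycle3[OF five] by simp
  then have "(z, j', k', p', q') \<in> {(d0, d1, d2, d3, d4), (d1, d2, d3, d4, d0), (d2, d3, d4, d0, d1),
      (d3, d4, d0, d1, d2), (d4, d0, d1, d2, d3)}"
    using five d by (intro cycle5_eq_cycle5D) auto
  then show ?thesis using x' y' by auto
qed

lemma sum_factorizations_cycle5:
  fixes F :: "('n::finite \<Rightarrow> 'n) \<Rightarrow> ('n \<Rightarrow> 'n) \<Rightarrow> 'b::comm_monoid_add"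
  assumes d: "distinct [d0, d1, d2, d3, d4]"
    and F0: "\<And>x y. \<not> (is_3cycle x \<and> is_3cycle y) \<Longrightarrow> F x y = 0"
  shows "(\<Sum>(x, y)\<in>factorizations (cycle5 d0 d1 d2 d3 d4). F x y) =
    F (cycle3 d3 d4 d0) (cycle3 d0 d1 d2) + F (cycle3 d4 d0 d1) (cycle3 d1 d2 d3) +
    F (cycle3 d0 d1 d2) (cycle3 d2 d3 d4) + F (cycle3 d1 d2 d3) (cycle3 d3 d4 d0) +
    F (cycle3 d2 d3 d4) (cycle3 d4 d0 d1)"
proof -
  define L where "L = [(cycle3 d3 d4 d0, cycle3 d0 d1 d2), (cycle3 d4 d0 d1, cycle3 d1 d2 d3),
     (cycle3 d0 d1 d2, cycle3 d2 d3 d4), (cycle3 d1 d2 d3, cycle3 d3 d4 d0),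
     (cycle3 d2 d3 d4, cycle3 d4 d0 d1)]"
  have "(\<Sum>(x, y)\<in>factorizations (cycle5 d0 d1 d2 d3 d4). F x y) = (\<Sum>(x, y)\<in>set L. F x y)"
  proof (rule sum.mono_neutral_right)
    show "finite (factorizations (cycle5 d0 d1 d2 d3 d4))" by simp
    show "set L \<subseteq> factorizations (cycle5 d0 d1 d2 d3 d4)"
      unfolding L_def factorizations_def using d distinct5_neq[OF d]
      by (simp add: cycle3_permutes, auto simp: fun_eq_iff cycle3_def cycle5_def)
    show "\<forall>p\<in>factorizations (cycle5 d0 d1 d2 d3 d4) - set L. (case p of (x, y) \<Rightarrow> F x y) = 0"
    proof clarify
      fix x y assume xy: "(x, y) \<in> factorizations (cycle5 d0 d1 d2 d3 d4)" "(x, y) \<notin> set L"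
      show "F x y = 0"
      proof (rule F0, rule notI)
        assume "is_3cycle x \<and> is_3cycle y"
        then have "(x, y) \<in> set L"
          using cycle5_eq_comp_3cycles[OF d, of x y] xy(1) unfolding L_def factorizations_def by simp
        with xy(2) show False by simp
      qed
    qed
  qed
  moreover have "distinct (map (\<lambda>(x, y). (y d0, y d1)) L)"
    by (simp add: L_def cycle3_def distinct5_neq[OF d])
  then have "distinct L" by (simp add: distinct_map)
  ultimately show ?thesis by (simp add: sum.distinct_set_conv_list L_def add.assoc)
qed

subsection \<open>The cochains on a 3-cycle\<close>

lemma pact_basis:
  assumes "bij s"
  shows "pact s (basis i) = basis (s i)"
proof -
  have "inv s l = i \<longleftrightarrow> l = s i" for l
    using assms by (metis bij_inv_eq_iff)
  then show ?thesis by (auto simp: fun_eq_iff pact_def basis_def)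
qed

lemma pact_cycle3: "distinct [i, j, k] \<Longrightarrow> pact (cycle3 i j k) v = (\<lambda>l. v (cycle3 k j i l))"
  by (simp add: pact_def inv_cycle3)

definition cycle3_form :: "'n \<Rightarrow> 'n \<Rightarrow> 'n \<Rightarrow> ('n \<Rightarrow> complex) \<Rightarrow> ('n \<Rightarrow> complex) \<Rightarrow> complex" where
  "cycle3_form p q r u v = u p * v q - u q * v p + u q * v r - u r * v q + u r * v p - u p * v r"

definition cycle3_weight :: "complex \<Rightarrow> complex \<Rightarrow> 'n \<Rightarrow> 'n \<Rightarrow> 'n \<Rightarrow> 'n \<Rightarrow> complex" where
  "cycle3_weight a b p q r z = (if z \<in> {p, q, r} then a else b)"

lemma cycle3_form_scale: "cycle3_form p q r u (\<lambda>z. s * f z) = s * cycle3_form p q r u f"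
  by (simp add: cycle3_form_def algebra_simps)

lemma double_sum_UNIV_restrict:
  fixes F :: "'a::finite \<Rightarrow> 'a \<Rightarrow> 'b::comm_monoid_add"
  assumes "\<And>l m. F l m \<noteq> 0 \<Longrightarrow> l \<in> S \<and> m \<in> S"
  shows "(\<Sum>l\<in>UNIV. \<Sum>m\<in>UNIV. F l m) = (\<Sum>l\<in>S. \<Sum>m\<in>S. F l m)"
proof -
  have "(\<Sum>l\<in>UNIV. \<Sum>m\<in>UNIV. F l m) = (\<Sum>l\<in>UNIV. \<Sum>m\<in>S. F l m)"
    by (rule sum.cong[OF refl], rule sum.mono_neutral_right) (use assms in auto)
  also have "\<dots> = (\<Sum>l\<in>S. \<Sum>m\<in>S. F l m)"
    by (rule sum.mono_neutral_right) (use assms in \<open>auto intro!: sum.neutral\<close>)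
  finally show ?thesis .
qed

lemma kappaL_cycle3:
  assumes d: "distinct [p, q, r]"
  shows "kappaL a b (cycle3 p q r) u v = (\<lambda>z. cycle3_form p q r u v * cycle3_weight a b p q r z)"
proof
  fix z
  have neq: "p \<noteq> q" "q \<noteq> p" "p \<noteq> r" "r \<noteq> p" "q \<noteq> r" "r \<noteq> q" using d by auto
  have kL: "kL_basis a b (cycle3 p q r) l m z =
    (if l = p \<and> m = q \<or> l = q \<and> m = r \<or> l = r \<and> m = p then cycle3_weight a b p q r z
     else if l = q \<and> m = p \<or> l = r \<and> m = q \<or> l = p \<and> m = r then - cycle3_weight a b p q r z
     else 0)" for l m
    using d is_3cycle_cycle3[OF d]
    by (auto simp: kL_basis_def cycle3_def cycle3_weight_def Let_def)
  have "kappaL a b (cycle3 p q r) u v z =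
      (\<Sum>l\<in>{p, q, r}. \<Sum>m\<in>{p, q, r}. u l * v m * kL_basis a b (cycle3 p q r) l m z)"
    unfolding kappaL_def by (rule double_sum_UNIV_restrict) (auto simp: kL split: if_splits)
  also have "\<dots> = cycle3_form p q r u v * cycle3_weight a b p q r z"
    using neq by (simp add: kL cycle3_form_def algebra_simps insert_commute)
  finally show "kappaL a b (cycle3 p q r) u v z = cycle3_form p q r u v * cycle3_weight a b p q r z" .
qed

lemma kappaC_cycle3:
  assumes d: "distinct [p, q, r]"
  shows "kappaC c (cycle3 p q r) u v = c * cycle3_form p q r u v"
proof -
  have neq: "p \<noteq> q" "q \<noteq> p" "p \<noteq> r" "r \<noteq> p" "q \<noteq> r" "r \<noteq> q" using d by auto
  have kC: "kC_basis c (cycle3 p q r) l m =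
    (if l = p \<and> m = q \<or> l = q \<and> m = r \<or> l = r \<and> m = p then c
     else if l = q \<and> m = p \<or> l = r \<and> m = q \<or> l = p \<and> m = r then - c else 0)" for l m
    using d is_3cycle_cycle3[OF d] by (auto simp: kC_basis_def cycle3_def)
  have "kappaC c (cycle3 p q r) u v =
      (\<Sum>l\<in>{p, q, r}. \<Sum>m\<in>{p, q, r}. u l * v m * kC_basis c (cycle3 p q r) l m)"
    unfolding kappaC_def by (rule double_sum_UNIV_restrict) (auto simp: kC split: if_splits)
  also have "\<dots> = c * cycle3_form p q r u v"
    using neq by (simp add: kC cycle3_form_def algebra_simps insert_commute)
  finally show ?thesis .
qed

lemma kappaL_not_3cycle: "\<not> is_3cycle x \<Longrightarrow> kappaL a b x u v = (\<lambda>z. 0)"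
  by (simp add: kappaL_def kL_basis_def)

lemma kappaC_not_3cycle: "\<not> is_3cycle x \<Longrightarrow> kappaC c x u v = 0"
  by (simp add: kappaC_def kC_basis_def)

lemma kappaL_zero_right: "kappaL a b x u (\<lambda>z. 0) = (\<lambda>z. 0)"
  by (simp add: kappaL_def)

lemma kappaC_zero_right: "kappaC c x u (\<lambda>z. 0) = 0"
  by (simp add: kappaC_def)

subsection \<open>The summands \<open>\<phi>\<^sub>x\<^sub>,\<^sub>y\<close> for two 3-cycles\<close>

definition phi_coeff :: "complex \<Rightarrow> complex \<Rightarrow> 'n \<Rightarrow> 'n \<Rightarrow> 'n \<Rightarrow> 'n \<Rightarrow> 'n \<Rightarrow> 'n \<Rightarrow>
   ('n \<Rightarrow> complex) \<Rightarrow> ('n \<Rightarrow> complex) \<Rightarrow> ('n \<Rightarrow> complex) \<Rightarrow> complex" where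
  "phi_coeff a b p q r i j k v1 v2 v3 =
     cycle3_form i j k v2 v3 * cycle3_form p q r (\<lambda>l. v1 l + v1 (cycle3 k j i l)) (cycle3_weight a b i j k)
   + cycle3_form i j k v3 v1 * cycle3_form p q r (\<lambda>l. v2 l + v2 (cycle3 k j i l)) (cycle3_weight a b i j k)
   + cycle3_form i j k v1 v2 * cycle3_form p q r (\<lambda>l. v3 l + v3 (cycle3 k j i l)) (cycle3_weight a b i j k)"

lemma phiL_xy_cycle3:
  assumes "distinct [p, q, r]" "distinct [i, j, k]"
  shows "phiL_xy a b (cycle3 p q r) (cycle3 i j k) v1 v2 v3 =
    (\<lambda>z. phi_coeff a b p q r i j k v1 v2 v3 * cycle3_weight a b p q r z)"
  using assms by (simp add: phiL_xy_def kappaL_cycle3 pact_cycle3 vadd_def cycle3_form_scale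
      phi_coeff_def fun_eq_iff algebra_simps)

lemma phiC_xy_cycle3:
  assumes "distinct [p, q, r]" "distinct [i, j, k]"
  shows "phiC_xy a b c (cycle3 p q r) (cycle3 i j k) v1 v2 v3 = c * phi_coeff a b p q r i j k v1 v2 v3"
  using assms by (simp add: phiC_xy_def kappaC_cycle3 kappaL_cycle3 pact_cycle3 vadd_def
      cycle3_form_scale phi_coeff_def algebra_simps)

lemma phiL_xy_not_3cycles: "\<not> (is_3cycle x \<and> is_3cycle y) \<Longrightarrow> phiL_xy a b x y v1 v2 v3 = (\<lambda>z. 0)"
  by (auto simp: phiL_xy_def kappaL_not_3cycle vadd_def kappaL_zero_right)

lemma phiC_xy_not_3cycles: "\<not> (is_3cycle x \<and> is_3cycle y) \<Longrightarrow> phiC_xy a b c x y v1 v2 v3 = 0"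
  by (auto simp: phiC_xy_def kappaC_not_3cycle kappaL_not_3cycle kappaC_zero_right)

subsection \<open>The \<open>g\<close>-components for a 5-cycle \<open>g\<close>\<close>

lemma phiL_cycle5:
  assumes d: "distinct [d0, d1, d2, d3, d4]"
  shows "phiL a b (cycle5 d0 d1 d2 d3 d4) v1 v2 v3 = (\<lambda>z.
      phi_coeff a b d3 d4 d0 d0 d1 d2 v1 v2 v3 * cycle3_weight a b d3 d4 d0 z
    + phi_coeff a b d4 d0 d1 d1 d2 d3 v1 v2 v3 * cycle3_weight a b d4 d0 d1 z
    + phi_coeff a b d0 d1 d2 d2 d3 d4 v1 v2 v3 * cycle3_weight a b d0 d1 d2 z
    + phi_coeff a b d1 d2 d3 d3 d4 d0 v1 v2 v3 * cycle3_weight a b d1 d2 d3 z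
    + phi_coeff a b d2 d3 d4 d4 d0 d1 v1 v2 v3 * cycle3_weight a b d2 d3 d4 z)"
  unfolding phiL_def
  by (subst sum_factorizations_cycle5[OF d]) (use distinct5_neq[OF d] in \<open>simp_all add: phiL_xy_not_3cycles phiL_xy_cycle3\<close>)

lemma phiC_cycle5:
  assumes d: "distinct [d0, d1, d2, d3, d4]"
  shows "phiC a b c (cycle5 d0 d1 d2 d3 d4) v1 v2 v3 = c * (
      phi_coeff a b d3 d4 d0 d0 d1 d2 v1 v2 v3
    + phi_coeff a b d4 d0 d1 d1 d2 d3 v1 v2 v3
    + phi_coeff a b d0 d1 d2 d2 d3 d4 v1 v2 v3
    + phi_coeff a b d1 d2 d3 d3 d4 d0 v1 v2 v3
    + phi_coeff a b d2 d3 d4 d4 d0 d1 v1 v2 v3)"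
  unfolding phiC_def
  by (subst sum_factorizations_cycle5[OF d])
    (use distinct5_neq[OF d] in \<open>simp_all add: phiC_xy_not_3cycles phiC_xy_cycle3 algebra_simps\<close>)

lemma phiC_cycle5_eq_0:
  assumes d: "distinct [d0, d1, d2, d3, d4]"
  shows "phiC a b c (cycle5 d0 d1 d2 d3 d4) v1 v2 v3 = 0"
  unfolding phiC_cycle5[OF d] using distinct5_neq[OF d]
  by (simp add: phi_coeff_def cycle3_form_def cycle3_def cycle3_weight_def algebra_simps)

lemma phiL_cycle5_fixed_basis:
  assumes d: "distinct [d0, d1, d2, d3, d4]" and i: "i \<notin> {d0, d1, d2, d3, d4}"
  shows "phiL a b (cycle5 d0 d1 d2 d3 d4) (basis i) (basis j) (basis k) = (\<lambda>p. 0)"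
proof -
  have "i \<noteq> d0" "i \<noteq> d1" "i \<noteq> d2" "i \<noteq> d3" "i \<noteq> d4"
    "d0 \<noteq> i" "d1 \<noteq> i" "d2 \<noteq> i" "d3 \<noteq> i" "d4 \<noteq> i"
    using i by auto
  then show ?thesis unfolding phiL_cycle5[OF d] using distinct5_neq[OF d]
    by (simp add: phi_coeff_def cycle3_form_def cycle3_def basis_def)
qed

lemma phiL_cycle5_basis_012:
  assumes d: "distinct [d0, d1, d2, d3, d4]"
  shows "phiL a b (cycle5 d0 d1 d2 d3 d4) (basis d0) (basis d1) (basis d2) =
     smul (2 * (a - b)^2) (vsub (vsub (vadd (basis d0) (basis d1)) (basis d2)) (basis d3))"
proof
  fix z
  have "z = d0 \<or> z = d1 \<or> z = d2 \<or> z = d3 \<or> z = d4 \<or> z \<notin> {d0, d1, d2, d3, d4}"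
    by auto
  then show "phiL a b (cycle5 d0 d1 d2 d3 d4) (basis d0) (basis d1) (basis d2) z =
     smul (2 * (a - b)^2) (vsub (vsub (vadd (basis d0) (basis d1)) (basis d2)) (basis d3)) z"
    unfolding phiL_cycle5[OF d] using distinct5_neq[OF d]
    by (elim disjE; simp add: phi_coeff_def cycle3_form_def cycle3_def basis_def cycle3_weight_def
        smul_def vsub_def vadd_def algebra_simps power2_eq_square)
qed

lemma phiL_cycle5_basis_013:
  assumes d: "distinct [d0, d1, d2, d3, d4]"
  shows "phiL a b (cycle5 d0 d1 d2 d3 d4) (basis d0) (basis d1) (basis d3) =
     smul (2 * (a - b)^2)
       (vsub (vadd (vadd (smul (-2) (basis d0)) (smul 2 (basis d2))) (basis d3)) (basis d4))"
proof
  fix z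
  have "z = d0 \<or> z = d1 \<or> z = d2 \<or> z = d3 \<or> z = d4 \<or> z \<notin> {d0, d1, d2, d3, d4}"
    by auto
  then show "phiL a b (cycle5 d0 d1 d2 d3 d4) (basis d0) (basis d1) (basis d3) z =
     smul (2 * (a - b)^2)
       (vsub (vadd (vadd (smul (-2) (basis d0)) (smul 2 (basis d2))) (basis d3)) (basis d4)) z"
    unfolding phiL_cycle5[OF d] using distinct5_neq[OF d]
    by (elim disjE; simp add: phi_coeff_def cycle3_form_def cycle3_def basis_def cycle3_weight_def
        smul_def vsub_def vadd_def algebra_simps power2_eq_square)
qed

lemma phiL_cycle5_orbit:
  assumes d: "distinct [d0, d1, d2, d3, d4]" and g: "g = cycle5 d0 d1 d2 d3 d4"
  shows "phiL a b g (basis i) (pact g (basis i)) (pact (g ^^ 2) (basis i)) =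
           smul (2 * (a - b)^2)
             (vsub (vsub (vadd (basis i) (pact g (basis i))) (pact (g ^^ 2) (basis i)))
                   (pact (g ^^ 3) (basis i)))" (is ?A)
    and "phiL a b g (basis i) (pact g (basis i)) (pact (g ^^ 3) (basis i)) =
           smul (2 * (a - b)^2)
             (vsub (vadd (vadd (smul (-2) (basis i)) (smul 2 (pact (g ^^ 2) (basis i))))
                         (pact (g ^^ 3) (basis i)))
                   (pact (g ^^ 4) (basis i)))" (is ?B)
proof -
  have "g permutes UNIV" using g cycle5_permutes[OF d] by simp
  then have pact_pow: "pact (g ^^ n) (basis l) = basis ((g ^^ n) l)" for n l
    by (intro pact_basis permutes_bij[of _ UNIV] permutes_funpow)
  have pact_g: "pact g (basis l) = basis (g l)" for l
    using pact_pow[of 1] by simp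
  consider (fixed) "i \<notin> {d0, d1, d2, d3, d4}"
    | (moved) e1 e2 e3 e4 where "distinct [i, e1, e2, e3, e4]" "g = cycle5 i e1 e2 e3 e4"
    using g d cycle5_rotate_to by metis
  then have "?A \<and> ?B"
  proof cases
    case fixed
    then have "g i = i" using g cycle5_moved[OF d] by blast
    then have "(g ^^ n) i = i" for n by (induction n) auto
    then have orbit: "pact (g ^^ n) (basis i) = basis i" "pact g (basis i) = basis i" for n
      using pact_pow pact_g \<open>g i = i\<close> by simp_all
    have "phiL a b g (basis i) (basis i) (basis i) = (\<lambda>p. 0)"
      using phiL_cycle5_fixed_basis[OF d fixed] g by simp
    then show ?thesis unfolding orbit by (simp add: fun_eq_iff smul_def vsub_def vadd_def)
  next
    case (moved e1 e2 e3 e4)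
    then have "pact g (basis i) = basis e1" "pact (g ^^ 2) (basis i) = basis e2"
      "pact (g ^^ 3) (basis i) = basis e3" "pact (g ^^ 4) (basis i) = basis e4"
      using pact_pow pact_g cycle5_funpow[OF moved(1)] by (simp_all add: cycle5_def)
    then show ?thesis
      using phiL_cycle5_basis_012[OF moved(1)] phiL_cycle5_basis_013[OF moved(1)] moved(2) by simp
  qed
  then show ?A and ?B by blast+
qed

theorem proposition7p3:
  fixes a b c :: complex and g :: "'n::finite \<Rightarrow> 'n"
  assumes "card (UNIV :: 'n set) \<ge> 3"
    and "is_5cycle g"
  shows "(\<forall>v1 v2 v3. phiC a b c g v1 v2 v3 = 0)
    \<and> (\<forall>i j k. pact g (basis i) = basis i \<longrightarrow> phiL a b g (basis i) (basis j) (basis k) = (\<lambda>p. 0))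
    \<and> (\<forall>i. phiL a b g (basis i) (pact g (basis i)) (pact (g ^^ 2) (basis i)) =
           smul (2 * (a - b)^2)
             (vsub (vsub (vadd (basis i) (pact g (basis i))) (pact (g ^^ 2) (basis i)))
                   (pact (g ^^ 3) (basis i))))
    \<and> (\<forall>i. phiL a b g (basis i) (pact g (basis i)) (pact (g ^^ 3) (basis i)) =
           smul (2 * (a - b)^2)
             (vsub (vadd (vadd (smul (-2) (basis i)) (smul 2 (pact (g ^^ 2) (basis i))))
                         (pact (g ^^ 3) (basis i)))
                   (pact (g ^^ 4) (basis i))))"
proof -
  obtain d0 d1 d2 d3 d4 where d: "distinct [d0, d1, d2, d3, d4]" and g: "g = cycle5 d0 d1 d2 d3 d4"
    using assms(2) by (rule is_5cycleE)
  have fixed: "phiL a b g (basis i) (basis j) (basis k) = (\<lambda>p. 0)"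
    if "pact g (basis i) = basis i" for i j k
  proof -
    have "basis (g i) = basis i" using that g d pact_basis permutes_bij cycle5_permutes by metis
    then have "g i = i" by (metis basis_def one_neq_zero)
    then have "i \<notin> {d0, d1, d2, d3, d4}" using g cycle5_moved[OF d] by blast
    then show ?thesis using g phiL_cycle5_fixed_basis[OF d] by simp
  qed
  show ?thesis
    using fixed phiC_cycle5_eq_0[OF d] phiL_cycle5_orbit[OF d g] g by blast
qed

end
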